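(* Let $q$ be a prime power, $h\geq 4$, and let $\alpha\in\mathbb{F}_{q^h}\setminus\mathbb{F}_q$ with $\mathbb{F}_{q^h}=\mathbb{F}_q(\alpha)$. For $s,t\in\mathbb{F}_q$ let $f_{s,t}:\mathbb{F}_{q^h}\to\mathbb{F}_q$ be the $\mathbb{F}_q$-linear functional defined on the basis $1,\alpha,\dots,\alpha^{h-1}$ by $f_{s,t}(1)=1$, $f_{s,t}(\alpha^2)=s$, $f_{s,t}(\alpha^{h-1})=t$, and $f_{s,t}(\alpha^j)=0$ for all other $j\in\{1,\dots,h-2\}\setminus\{2\}$. Then there exist at least $q-1$ pairs $(s,t)\in\mathbb{F}_q^2$ such that $f=f_{s,t}$ and $\beta=1$ satisfy: (1) $f(\alpha/\beta)\neq 1$, and (2) for all $k\in\mathbb{F}_q$, $k\neq f\left(\frac{\alpha^2}{\beta}\right)+\left(f\left(\frac{\beta^2}{\alpha+k}\right)+k\right)f\left(\frac{\alpha}{\beta}\right)+k f\left(\frac{\beta^2}{\alpha+k}\right)f\left(\frac{1}{\beta}\right)$. *)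

theory Defs
  imports "HOL-Computational_Algebra.Primes"
begin

definition is_subfield :: "'a::field set \<Rightarrow> bool" where
  "is_subfield S \<longleftrightarrow> 0 \<in> S \<and> 1 \<in> S \<and>
     (\<forall>x\<in>S. \<forall>y\<in>S. x + y \<in> S \<and> x * y \<in> S) \<and>
     (\<forall>x\<in>S. - x \<in> S) \<and> (\<forall>x\<in>S. x \<noteq> 0 \<longrightarrow> inverse x \<in> S)"

definition field_adjoin :: "'a::field set \<Rightarrow> 'a \<Rightarrow> 'a set" where
  "field_adjoin K \<alpha> = \<Inter>{S. is_subfield S \<and> K \<subseteq> S \<and> \<alpha> \<in> S}"

definition basis_functional ::
    "'a::field set \<Rightarrow> 'a \<Rightarrow> nat \<Rightarrow> (nat \<Rightarrow> 'a) \<Rightarrow> 'a \<Rightarrow> 'a" where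
  "basis_functional K \<alpha> h v y =
     (THE z. \<exists>c. (\<forall>i<h. c i \<in> K) \<and> y = (\<Sum>i<h. c i * \<alpha> ^ i) \<and> z = (\<Sum>i<h. c i * v i))"

definition f_st :: "'a::field set \<Rightarrow> 'a \<Rightarrow> nat \<Rightarrow> 'a \<Rightarrow> 'a \<Rightarrow> 'a \<Rightarrow> 'a" where
  "f_st K \<alpha> h s t = basis_functional K \<alpha> h
     (\<lambda>j. if j = 0 then 1 else if j = 2 then s else if j = h - 1 then t else 0)"

end

theory Submission
  imports Defs "HOL-Computational_Algebra.Polynomial" "HOL-Library.FuncSet"
begin

text \<open>
  With \<open>\<beta> = 1\<close> we have \<open>f\<^sub>s\<^sub>,\<^sub>t(\<alpha>) = 0\<close> and \<open>f\<^sub>s\<^sub>,\<^sub>t(1) = 1\<close>, so condition (1) holds and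
  condition (2) reads \<open>k \<noteq> s + k f\<^sub>s\<^sub>,\<^sub>t(1/(\<alpha>+k))\<close>. For \<open>k = 0\<close> this just says \<open>s \<noteq> 0\<close>.
  The coordinate of \<open>1/(\<alpha>+k)\<close> at \<open>\<alpha>^(h-1)\<close> is nonzero, since otherwise \<open>(\<alpha>+k)\<close> times a
  polynomial of degree \<open>< h-1\<close> in \<open>\<alpha>\<close> would be \<open>1\<close>, contradicting \<open>[K(\<alpha>):K] = h\<close>.
  Hence \<open>f\<^sub>s\<^sub>,\<^sub>t(1/(\<alpha>+k))\<close> is a non-constant affine function of \<open>t\<close>, and for fixed \<open>s \<noteq> 0\<close>
  each \<open>k \<noteq> 0\<close> excludes exactly one \<open>t\<close>. These are at most \<open>q - 1\<close> values, so some
  \<open>t \<in> K\<close> works for every \<open>s \<noteq> 0\<close>.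
\<close>

lemma subfield_zero: "is_subfield S \<Longrightarrow> 0 \<in> S"
  and subfield_one: "is_subfield S \<Longrightarrow> 1 \<in> S"
  and subfield_add: "is_subfield S \<Longrightarrow> x \<in> S \<Longrightarrow> y \<in> S \<Longrightarrow> x + y \<in> S"
  and subfield_mult: "is_subfield S \<Longrightarrow> x \<in> S \<Longrightarrow> y \<in> S \<Longrightarrow> x * y \<in> S"
  and subfield_uminus: "is_subfield S \<Longrightarrow> x \<in> S \<Longrightarrow> - x \<in> S"
  by (simp_all add: is_subfield_def)

lemma subfield_inverse: "is_subfield S \<Longrightarrow> x \<in> S \<Longrightarrow> inverse x \<in> S"
  unfolding is_subfield_def by (cases "x = 0") auto

lemma subfield_diff: "is_subfield S \<Longrightarrow> x \<in> S \<Longrightarrow> y \<in> S \<Longrightarrow> x - y \<in> S"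
  using subfield_add subfield_uminus by (metis diff_conv_add_uminus)

lemma subfield_divide: "is_subfield S \<Longrightarrow> x \<in> S \<Longrightarrow> y \<in> S \<Longrightarrow> x / y \<in> S"
  using subfield_mult subfield_inverse by (metis divide_inverse)

lemma subfield_sum:
  "is_subfield S \<Longrightarrow> (\<And>i. i \<in> A \<Longrightarrow> g i \<in> S) \<Longrightarrow> sum g A \<in> S"
  by (induction A rule: infinite_finite_induct) (auto intro: subfield_zero subfield_add)

lemma is_subfield_if_finite_subring:
  fixes S :: "'a::field set"
  assumes "finite S" "0 \<in> S" "1 \<in> S"
    and "\<And>x y. x \<in> S \<Longrightarrow> y \<in> S \<Longrightarrow> x + y \<in> S"
    and mult: "\<And>x y. x \<in> S \<Longrightarrow> y \<in> S \<Longrightarrow> x * y \<in> S"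
    and "\<And>x. x \<in> S \<Longrightarrow> - x \<in> S"
  shows "is_subfield S"
  unfolding is_subfield_def
proof (intro conjI ballI impI)
  fix x assume x: "x \<in> S" "x \<noteq> 0"
  have "(\<lambda>y. x * y) ` S = S"
    using x mult \<open>finite S\<close> by (intro endo_inj_surj) (auto intro: inj_onI)
  then obtain y where "y \<in> S" "x * y = 1"
    using \<open>1 \<in> S\<close> by (metis imageE)
  then show "inverse x \<in> S"
    using x(2) by (metis inverse_unique)
qed (use assms in auto)

lemma field_adjoin_least:
  "is_subfield S \<Longrightarrow> K \<subseteq> S \<Longrightarrow> \<alpha> \<in> S \<Longrightarrow> field_adjoin K \<alpha> \<subseteq> S"
  unfolding field_adjoin_def by blast

lemma coeff_mult_in_subfield:
  assumes "is_subfield K" "\<And>i. coeff p i \<in> K" "\<And>i. coeff q i \<in> K"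
  shows "coeff (p * q) n \<in> K"
  unfolding coeff_mult using assms by (auto intro: subfield_sum subfield_mult)

lemma ex_avoiding_affine_values:
  fixes a b :: "'b \<Rightarrow> 'a::field"
  assumes "finite A" "card A < card K" "\<forall>x\<in>A. b x \<noteq> 0"
  shows "\<exists>t\<in>K. \<forall>x\<in>A. a x + t * b x \<noteq> 0"
proof -
  define bad where "bad = (\<lambda>x. - a x / b x) ` A"
  have "card bad < card K"
    unfolding bad_def using card_image_le[OF \<open>finite A\<close>] assms(2) by (rule le_less_trans)
  then have "\<not> K \<subseteq> bad"
    using card_mono[of bad K] \<open>finite A\<close> by (auto simp: bad_def)
  then obtain t where t: "t \<in> K" "t \<notin> bad"
    by blast
  have "a x + t * b x \<noteq> 0" if "x \<in> A" for x
  proof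
    assume "a x + t * b x = 0"
    then have "t = - a x / b x"
      using assms(3) that by (simp add: field_simps add_eq_0_iff)
    then show False
      using t(2) that unfolding bad_def by blast
  qed
  then show ?thesis
    using t(1) by blast
qed

definition power_span :: "'a::field set \<Rightarrow> 'a \<Rightarrow> nat \<Rightarrow> 'a set" where
  "power_span K \<alpha> n = {\<Sum>i<n. c i * \<alpha> ^ i | c. \<forall>i<n. c i \<in> K}"

lemma power_span_sumI: "\<forall>i<n. c i \<in> K \<Longrightarrow> (\<Sum>i<n. c i * \<alpha> ^ i) \<in> power_span K \<alpha> n"
  unfolding power_span_def by blast

lemma power_span_eq_image:
  "power_span K \<alpha> n = (\<lambda>c. \<Sum>i<n. c i * \<alpha> ^ i) ` (PiE {..<n} (\<lambda>_. K))"
  unfolding power_span_def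
proof safe
  fix c assume "\<forall>i<n. c i \<in> K"
  then show "(\<Sum>i<n. c i * \<alpha> ^ i) \<in> (\<lambda>c. \<Sum>i<n. c i * \<alpha> ^ i) ` (PiE {..<n} (\<lambda>_. K))"
    by (intro image_eqI[where x = "restrict c {..<n}"]) auto
qed auto

lemma finite_power_span: "finite K \<Longrightarrow> finite (power_span K \<alpha> n)"
  by (simp add: power_span_eq_image finite_PiE)

lemma card_power_span_le: "finite K \<Longrightarrow> card (power_span K \<alpha> n) \<le> card K ^ n"
  unfolding power_span_eq_image
  using card_image_le[OF finite_PiE, of "{..<n}" "\<lambda>_. K" "\<lambda>c. \<Sum>i<n. c i * \<alpha> ^ i"]
  by (simp add: card_PiE)

context
  fixes K :: "'a::field set" and \<alpha> :: 'a
  assumes subfield_K: "is_subfield K"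
begin

lemma power_span_zero: "0 \<in> power_span K \<alpha> n"
  using power_span_sumI[of n "\<lambda>_. 0" K \<alpha>] subfield_zero[OF subfield_K] by simp

lemma power_span_add:
  assumes "x \<in> power_span K \<alpha> n" "y \<in> power_span K \<alpha> n"
  shows "x + y \<in> power_span K \<alpha> n"
proof -
  obtain c d where "\<forall>i<n. c i \<in> K" "x = (\<Sum>i<n. c i * \<alpha> ^ i)"
    and "\<forall>i<n. d i \<in> K" "y = (\<Sum>i<n. d i * \<alpha> ^ i)"
    using assms unfolding power_span_def by auto
  then show ?thesis
    using power_span_sumI[of n "\<lambda>i. c i + d i" K \<alpha>] subfield_add[OF subfield_K]
    by (simp add: sum.distrib distrib_right)
qed

lemma power_span_scale:
  assumes "a \<in> K" "x \<in> power_span K \<alpha> n"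
  shows "a * x \<in> power_span K \<alpha> n"
proof -
  obtain c where "\<forall>i<n. c i \<in> K" "x = (\<Sum>i<n. c i * \<alpha> ^ i)"
    using assms unfolding power_span_def by auto
  then show ?thesis
    using power_span_sumI[of n "\<lambda>i. a * c i" K \<alpha>] subfield_mult[OF subfield_K] \<open>a \<in> K\<close>
    by (simp add: sum_distrib_left mult.assoc)
qed

lemma power_span_sum:
  "(\<And>i. i \<in> A \<Longrightarrow> g i \<in> power_span K \<alpha> n) \<Longrightarrow> sum g A \<in> power_span K \<alpha> n"
  by (induction A rule: infinite_finite_induct) (auto intro: power_span_add power_span_zero)

lemma power_span_power:
  assumes "j < n"
  shows "\<alpha> ^ j \<in> power_span K \<alpha> n"
proof -
  have "\<alpha> ^ j = (\<Sum>i<n. (if i = j then 1 else 0) * \<alpha> ^ i)"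
    using assms by (simp add: if_distrib[of "\<lambda>c. c * _"] sum.delta cong: if_cong)
  then show ?thesis
    using power_span_sumI[of n "\<lambda>i. if i = j then 1 else 0" K \<alpha>] subfield_zero[OF subfield_K] subfield_one[OF subfield_K]
    by simp
qed

lemma power_span_times_alpha:
  assumes d: "\<alpha> ^ d \<in> power_span K \<alpha> d" and x: "x \<in> power_span K \<alpha> d"
  shows "\<alpha> * x \<in> power_span K \<alpha> d"
proof -
  obtain c where c: "\<forall>i<d. c i \<in> K" "x = (\<Sum>i<d. c i * \<alpha> ^ i)"
    using x unfolding power_span_def by auto
  have "\<alpha> ^ Suc i \<in> power_span K \<alpha> d" if "i < d" for i
    using d power_span_power[of "Suc i"] that by (cases "Suc i = d") auto
  then have "(\<Sum>i<d. c i * \<alpha> ^ Suc i) \<in> power_span K \<alpha> d"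
    using c(1) by (auto intro: power_span_sum power_span_scale)
  moreover have "\<alpha> * x = (\<Sum>i<d. c i * \<alpha> ^ Suc i)"
    using c(2) by (simp add: sum_distrib_left algebra_simps)
  ultimately show ?thesis
    by simp
qed

lemma power_span_times:
  assumes d: "\<alpha> ^ d \<in> power_span K \<alpha> d"
    and x: "x \<in> power_span K \<alpha> d" and y: "y \<in> power_span K \<alpha> d"
  shows "x * y \<in> power_span K \<alpha> d"
proof -
  have powers: "\<alpha> ^ j * y \<in> power_span K \<alpha> d" for j
    by (induction j) (use y power_span_times_alpha[OF d] in \<open>auto simp: mult.assoc\<close>)
  obtain c where c: "\<forall>i<d. c i \<in> K" "x = (\<Sum>i<d. c i * \<alpha> ^ i)"
    using x unfolding power_span_def by auto
  have "x * y = (\<Sum>i<d. c i * (\<alpha> ^ i * y))"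
    using c(2) by (simp add: sum_distrib_right mult.assoc)
  also have "\<dots> \<in> power_span K \<alpha> d"
    using c(1) powers by (auto intro: power_span_sum power_span_scale)
  finally show ?thesis .
qed

lemma field_adjoin_subset_power_span:
  assumes "finite K" "0 < d" and d: "\<alpha> ^ d \<in> power_span K \<alpha> d"
  shows "field_adjoin K \<alpha> \<subseteq> power_span K \<alpha> d"
proof (rule field_adjoin_least)
  have one: "1 \<in> power_span K \<alpha> d"
    using power_span_power[of 0 d] \<open>0 < d\<close> by simp
  show "K \<subseteq> power_span K \<alpha> d"
    using power_span_scale[OF _ one] by auto
  show "\<alpha> \<in> power_span K \<alpha> d"
    using power_span_times_alpha[OF d one] by simp
  show "is_subfield (power_span K \<alpha> d)"
    using power_span_scale[OF subfield_uminus[OF subfield_K subfield_one[OF subfield_K]]] one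
    by (intro is_subfield_if_finite_subring finite_power_span \<open>finite K\<close> power_span_zero
        power_span_add power_span_times[OF d]) auto
qed

end

locale primitive_extension =
  fixes K :: "'a::{field,finite} set" and \<alpha> :: 'a and h :: nat
  assumes subfield: "is_subfield K"
    and card_UNIV: "card (UNIV :: 'a set) = card K ^ h"
    and generates: "field_adjoin K \<alpha> = UNIV"
begin

lemma card_K_ge_2: "2 \<le> card K"
proof -
  have "card {0::'a, 1} \<le> card K"
    using subfield_zero[OF subfield] subfield_one[OF subfield] by (intro card_mono) auto
  then show ?thesis
    by simp
qed

lemma degree_pos: "0 < h"
proof (rule ccontr)
  assume "\<not> 0 < h"
  then have "card (UNIV :: 'a set) = 1"
    using card_UNIV by simp
  moreover have "card K \<le> card (UNIV :: 'a set)"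
    by (rule card_mono) auto
  ultimately show False
    using card_K_ge_2 by simp
qed

lemma power_notin_power_span:
  assumes "d < h"
  shows "\<alpha> ^ d \<notin> power_span K \<alpha> d"
proof
  assume d: "\<alpha> ^ d \<in> power_span K \<alpha> d"
  have "0 < d"
    using d by (cases d) (auto simp: power_span_def)
  then have "power_span K \<alpha> d = UNIV"
    using field_adjoin_subset_power_span[OF subfield _ _ d] generates by auto
  then have "card K ^ h \<le> card K ^ d"
    using card_power_span_le[of K \<alpha> d] card_UNIV by simp
  moreover have "card K ^ d < card K ^ h"
    using card_K_ge_2 assms by (intro power_strict_increasing) auto
  ultimately show False
    by simp
qed

lemma powers_independent:
  assumes "n \<le> h" "\<forall>i<n. c i \<in> K" "(\<Sum>i<n. c i * \<alpha> ^ i) = 0"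
  shows "\<forall>i<n. c i = 0"
  using assms
proof (induction n)
  case (Suc n)
  have "c n = 0"
  proof (rule ccontr)
    assume "c n \<noteq> 0"
    have "(\<Sum>i<n. c i * \<alpha> ^ i) + c n * \<alpha> ^ n = 0"
      using Suc.prems(3) by simp
    then have "\<alpha> ^ n = (\<Sum>i<n. (- c i / c n) * \<alpha> ^ i)"
      using \<open>c n \<noteq> 0\<close>
      by (simp add: sum_divide_distrib[symmetric] sum_negf eq_divide_eq add_eq_0_iff2 mult.commute)
    moreover have "(\<Sum>i<n. (- c i / c n) * \<alpha> ^ i) \<in> power_span K \<alpha> n"
      using Suc.prems(2)
      by (intro power_span_sumI[where c = "\<lambda>i. - c i / c n"])
        (auto intro!: subfield_uminus[OF subfield] subfield_divide[OF subfield])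
    ultimately show False
      using power_notin_power_span[of n] Suc.prems(1) by simp
  qed
  with Suc show ?case
    by (simp add: less_Suc_eq)
qed simp

lemma power_sum_coeffs_unique:
  assumes "\<forall>i<h. c i \<in> K" "\<forall>i<h. d i \<in> K"
    and "(\<Sum>i<h. c i * \<alpha> ^ i) = (\<Sum>i<h. d i * \<alpha> ^ i)"
  shows "\<forall>i<h. c i = d i"
proof -
  have "\<forall>i<h. c i - d i \<in> K"
    using assms(1,2) subfield_diff[OF subfield] by blast
  moreover have "(\<Sum>i<h. (c i - d i) * \<alpha> ^ i) = 0"
    unfolding left_diff_distrib sum_subtractf assms(3) by (rule diff_self)
  ultimately have "\<forall>i<h. c i - d i = 0"
    by (rule powers_independent[OF order_refl])
  then show ?thesis
    by simp
qed

lemma power_span_UNIV: "power_span K \<alpha> h = UNIV"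
proof -
  let ?F = "\<lambda>c. \<Sum>i<h. c i * \<alpha> ^ i" and ?P = "PiE {..<h} (\<lambda>_. K)"
  have "inj_on ?F ?P"
  proof (rule inj_onI)
    fix c d assume cd: "c \<in> ?P" "d \<in> ?P" "?F c = ?F d"
    then show "c = d"
      using power_sum_coeffs_unique[of c d] by (intro PiE_ext[OF cd(1,2)]) auto
  qed
  then have "card (?F ` ?P) = card (UNIV :: 'a set)"
    by (simp add: card_image card_PiE card_UNIV)
  then show ?thesis
    unfolding power_span_eq_image by (intro card_subset_eq) auto
qed

lemma poly_eq_0_if_root:
  assumes "\<And>i. coeff p i \<in> K" "degree p < h" "poly p \<alpha> = 0"
  shows "p = 0"
proof -
  have "poly p \<alpha> = (\<Sum>i<h. coeff p i * \<alpha> ^ i)"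
    unfolding poly_altdef using assms(2)
    by (intro sum.mono_neutral_left) (auto simp: coeff_eq_0)
  then have low: "\<forall>i<h. coeff p i = 0"
    using assms(1,3) by (intro powers_independent[OF order_refl]) auto
  show ?thesis
  proof (rule poly_eqI)
    fix n
    show "coeff p n = coeff 0 n"
      using low assms(2) by (cases "n < h") (auto simp: coeff_eq_0)
  qed
qed

definition coords :: "'a \<Rightarrow> nat \<Rightarrow> 'a" where
  "coords y = (SOME c. (\<forall>i<h. c i \<in> K) \<and> y = (\<Sum>i<h. c i * \<alpha> ^ i))"

lemma coords_in_K: "\<forall>i<h. coords y i \<in> K"
  and sum_coords: "(\<Sum>i<h. coords y i * \<alpha> ^ i) = y"
proof -
  obtain c where "(\<forall>i<h. c i \<in> K) \<and> y = (\<Sum>i<h. c i * \<alpha> ^ i)"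
    using power_span_UNIV unfolding power_span_def by blast
  then have "(\<forall>i<h. coords y i \<in> K) \<and> y = (\<Sum>i<h. coords y i * \<alpha> ^ i)"
    unfolding coords_def
    by (rule someI[where P = "\<lambda>c. (\<forall>i<h. c i \<in> K) \<and> y = (\<Sum>i<h. c i * \<alpha> ^ i)"])
  then show "\<forall>i<h. coords y i \<in> K" "(\<Sum>i<h. coords y i * \<alpha> ^ i) = y"
    by metis+
qed

lemma coords_power_sum:
  assumes "\<forall>i<h. c i \<in> K" "i < h"
  shows "coords (\<Sum>i<h. c i * \<alpha> ^ i) i = c i"
  using power_sum_coeffs_unique[OF coords_in_K assms(1) sum_coords] assms(2) by blast

lemma coords_power:
  assumes "j < h" "i < h"
  shows "coords (\<alpha> ^ j) i = (if i = j then 1 else 0)"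
proof -
  have "\<alpha> ^ j = (\<Sum>i<h. (if i = j then 1 else 0) * \<alpha> ^ i)"
    using assms(1) by (simp add: if_distrib[of "\<lambda>c. c * _"] sum.delta cong: if_cong)
  then show ?thesis
    using coords_power_sum[of "\<lambda>i. if i = j then 1 else 0"] assms(2)
      subfield_zero[OF subfield] subfield_one[OF subfield] by simp
qed

lemma basis_functional_eq: "basis_functional K \<alpha> h v y = (\<Sum>i<h. coords y i * v i)"
  unfolding basis_functional_def
proof (rule the_equality)
  show "\<exists>c. (\<forall>i<h. c i \<in> K) \<and> y = (\<Sum>i<h. c i * \<alpha> ^ i) \<and>
      (\<Sum>i<h. coords y i * v i) = (\<Sum>i<h. c i * v i)"
    using coords_in_K sum_coords by metis
next
  fix z assume "\<exists>c. (\<forall>i<h. c i \<in> K) \<and> y = (\<Sum>i<h. c i * \<alpha> ^ i) \<and> z = (\<Sum>i<h. c i * v i)"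
  then show "z = (\<Sum>i<h. coords y i * v i)"
    using coords_power_sum by (auto intro: sum.cong)
qed

lemma f_st_eq:
  assumes "4 \<le> h"
  shows "f_st K \<alpha> h s t y = coords y 0 + s * coords y 2 + t * coords y (h - 1)"
proof -
  have "(\<Sum>i<h. coords y i * (if i = 0 then 1 else if i = 2 then s else if i = h - 1 then t else 0))
      = (\<Sum>i<h. (if i = 0 then coords y i else 0) + (if i = 2 then s * coords y i else 0)
           + (if i = h - 1 then t * coords y i else 0))"
    using assms by (intro sum.cong) auto
  then show ?thesis
    unfolding f_st_def basis_functional_eq using assms by (simp add: sum.distrib sum.delta)
qed

lemma f_st_basis:
  assumes "4 \<le> h"
  shows "f_st K \<alpha> h s t 1 = 1" "f_st K \<alpha> h s t \<alpha> = 0" "f_st K \<alpha> h s t (\<alpha> ^ 2) = s"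
  using f_st_eq[OF assms] coords_power[of 0] coords_power[of 1] coords_power[of 2] assms
  by simp_all

lemma top_coord_of_inverse_nonzero:
  assumes "k \<in> K" "\<alpha> \<notin> K"
  shows "coords (inverse (\<alpha> + k)) (h - 1) \<noteq> 0"
proof
  define y where "y = inverse (\<alpha> + k)"
  assume top: "coords y (h - 1) = 0"
  define p where "p = (\<Sum>i<h - 1. monom (coords y i) i)"
  have coeff_p: "coeff p i = (if i < h - 1 then coords y i else 0)" for i
    unfolding p_def by (simp add: coeff_sum coeff_monom sum.delta)
  have "poly p \<alpha> = (\<Sum>i<Suc (h - 1). coords y i * \<alpha> ^ i)"
    using top by (simp add: p_def poly_sum poly_monom)
  then have "poly p \<alpha> = y"
    using sum_coords[of y] degree_pos by simp
  moreover have "\<alpha> + k \<noteq> 0"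
    using assms subfield_uminus[OF subfield] by (metis add_eq_0_iff minus_minus)
  ultimately have "poly ([:k, 1:] * p - 1) \<alpha> = 0"
    unfolding y_def by (simp add: field_simps)
  moreover have "coeff ([:k, 1:] * p - 1) i \<in> K" for i
  proof -
    have "coeff p j \<in> K" for j
      using coeff_p coords_in_K subfield_zero[OF subfield] by auto
    moreover have "coeff [:k, 1:] j \<in> K" for j
      using assms(1) subfield_zero[OF subfield] subfield_one[OF subfield]
      by (auto simp: coeff_pCons split: nat.split)
    ultimately show ?thesis
      unfolding coeff_diff using subfield_zero[OF subfield] subfield_one[OF subfield]
      by (intro subfield_diff[OF subfield] coeff_mult_in_subfield[OF subfield]) auto
  qed
  moreover have "degree ([:k, 1:] * p - 1) \<le> h - 1"
    using coeff_p by (intro degree_le) (auto simp: coeff_pCons split: nat.split)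
  then have "degree ([:k, 1:] * p - 1) < h"
    using degree_pos by linarith
  ultimately have "[:k, 1:] * p = 1"
    using poly_eq_0_if_root by fastforce
  then show False
    using degree_mult_eq[of "[:k, 1:]" p] by (cases "p = 0") auto
qed

lemma ex_t_without_fixed_point:
  assumes "4 \<le> h" "\<alpha> \<notin> K" "s \<in> K" "s \<noteq> 0"
  shows "\<exists>t\<in>K. \<forall>k\<in>K. k \<noteq> s + k * f_st K \<alpha> h s t (inverse (\<alpha> + k))"
proof -
  let ?c = "\<lambda>k. coords (inverse (\<alpha> + k))"
  have "card (K - {0}) < card K"
    using subfield_zero[OF subfield] card_K_ge_2 by simp
  then have "\<exists>t\<in>K. \<forall>k\<in>K - {0}. (s + k * (?c k 0 + s * ?c k 2) - k) + t * (k * ?c k (h - 1)) \<noteq> 0"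
    using top_coord_of_inverse_nonzero \<open>\<alpha> \<notin> K\<close> by (intro ex_avoiding_affine_values) auto
  then obtain t where "t \<in> K"
    and t: "\<forall>k\<in>K - {0}. (s + k * (?c k 0 + s * ?c k 2) - k) + t * (k * ?c k (h - 1)) \<noteq> 0"
    by blast
  have "k \<noteq> s + k * f_st K \<alpha> h s t (inverse (\<alpha> + k))" if "k \<in> K" for k
  proof (cases "k = 0")
    case False
    have "s + k * f_st K \<alpha> h s t (inverse (\<alpha> + k)) - k
        = (s + k * (?c k 0 + s * ?c k 2) - k) + t * (k * ?c k (h - 1))"
      unfolding f_st_eq[OF \<open>4 \<le> h\<close>] by (simp add: algebra_simps)
    moreover have "(s + k * (?c k 0 + s * ?c k 2) - k) + t * (k * ?c k (h - 1)) \<noteq> 0"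
      using t that False by blast
    ultimately show ?thesis
      by (metis diff_self)
  qed (use \<open>s \<noteq> 0\<close> in simp)
  with \<open>t \<in> K\<close> show ?thesis
    by blast
qed

end

theorem proposition4p4:
  fixes K :: "'a::{field,finite} set" and \<alpha> :: 'a and q h :: nat
  assumes "\<exists>p k. prime p \<and> k > 0 \<and> q = p ^ k"
    and "h \<ge> 4"
    and "card (UNIV :: 'a set) = q ^ h"
    and "is_subfield K" and "card K = q"
    and "\<alpha> \<notin> K"
    and "field_adjoin K \<alpha> = UNIV"
  shows "card {(s, t). s \<in> K \<and> t \<in> K \<and>
            (let f = f_st K \<alpha> h s t; \<beta> = (1::'a) in
               f (\<alpha> / \<beta>) \<noteq> 1 \<and>
               (\<forall>k\<in>K. k \<noteq> f (\<alpha>^2 / \<beta>) + (f (\<beta>^2 / (\<alpha> + k)) + k) * f (\<alpha> / \<beta>)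
                              + k * f (\<beta>^2 / (\<alpha> + k)) * f (1 / \<beta>)))} \<ge> q - 1"
  (is "card ?G \<ge> _")
proof -
  interpret primitive_extension K \<alpha> h
    using assms(3-5,7) by unfold_locales simp_all
  have "K - {0} \<subseteq> fst ` ?G"
  proof
    fix s assume "s \<in> K - {0}"
    then obtain t where "t \<in> K" "\<forall>k\<in>K. k \<noteq> s + k * f_st K \<alpha> h s t (inverse (\<alpha> + k))"
      using ex_t_without_fixed_point assms(2,6) by blast
    then have "(s, t) \<in> ?G"
      using \<open>s \<in> K - {0}\<close> f_st_basis[OF assms(2)] by (simp add: Let_def inverse_eq_divide)
    then show "s \<in> fst ` ?G"
      by force
  qed
  then have "card (K - {0}) \<le> card ?G"
    by (meson card_image_le card_mono finite order_trans)
  then show ?thesis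
    using assms(5) subfield_zero[OF assms(4)] by simp
qed

end
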